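(* Let $\Gamma$ be the graph with exactly two vertices $s$ and $t$, which are not adjacent, and let $G=G(C_\Gamma)$. If $a\in A_5(s)$ is an involution, then its centralizer $Z_G(a)$ is contained in $S_5(s)$.
   Context: For a graph $\Gamma$ with vertex set $S$, $G(C_\Gamma)$ is the group with generators $s_1,s_2,s_3,s_4$ for each $s\in S$ and exactly the following relations: every generator is an involution; for each $s\in S$, $(s_is_{i+1})^3=e$ for $i=1,2,3$ and $(s_is_j)^2=e$ for $|i-j|\ge2$; for all distinct $s,t\in S$, $(s_4t_4)^2=e$; for all distinct adjacent $s,t\in S$, $(s_1t_1)^2=(s_1t_3)^2=(s_3t_1)^2=(s_3t_3)^2=e$. Thus here $G$ is generated by $s_1,\dots,s_4,t_1,\dots,t_4$ with the relations among the $s_i$, among the $t_i$, and $(s_4t_4)^2=e$ only. $S_5(s)=\langle s_1,s_2,s_3,s_4\rangle\cong S_5$ and $A_5(s)$ is its index-$2$ subgroup ($\cong A_5$). $Z_G(a)=\{g\in G: ga=ag\}$. *)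

theory Defs
  imports "HOL-Algebra.Generated_Groups"
begin

text \<open>Since every generator is an involution, elements of G are represented by
  words (lists) of generators; the group is the free monoid on the generators
  modulo the congruence generated by the relators (r = empty word).\<close>

datatype vtx = Vs | Vt

definition Gens :: "(vtx \<times> nat) set" where
  "Gens = {(v, i). i \<in> {1..4}}"

definition Rels :: "(vtx \<times> nat) list set" where
  "Rels =
     {[(v, i), (v, i)] | v i. i \<in> {1..4}}
   \<union> {concat (replicate 3 [(v, i), (v, Suc i)]) | v i. i \<in> {1..3}}
   \<union> {concat (replicate 2 [(v, i), (v, j)]) | v i j. i \<in> {1..4} \<and> j \<in> {1..4} \<and> (i + 2 \<le> j \<or> j + 2 \<le> i)}
   \<union> {concat (replicate 2 [(v, 4), (w, 4)]) | v w. v \<noteq> w}"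

text \<open>No relations between s_1,s_3 and t_1,t_3 since s and t are not adjacent.\<close>

definition rstep :: "((vtx \<times> nat) list \<times> (vtx \<times> nat) list) set" where
  "rstep = {(u @ r @ v, u @ v) | u r v. u \<in> lists Gens \<and> v \<in> lists Gens \<and> r \<in> Rels}"

definition weq :: "((vtx \<times> nat) list \<times> (vtx \<times> nat) list) set" where
  "weq = (rstep \<union> rstep\<inverse>)\<^sup>*"

definition cls :: "(vtx \<times> nat) list \<Rightarrow> (vtx \<times> nat) list set" where
  "cls w = weq `` {w}"

definition GC :: "(vtx \<times> nat) list set monoid" where
  "GC = \<lparr> carrier = cls ` lists Gens,
          mult = (\<lambda>A B. weq `` {u @ v | u v. u \<in> A \<and> v \<in> B}),
          one = cls [] \<rparr>"

definition S5s :: "(vtx \<times> nat) list set set" where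
  "S5s = generate GC {cls [(Vs, i)] | i. i \<in> {1..4}}"

text \<open>A_5(s): the index-2 subgroup of S_5(s), i.e. elements represented by
  words of even length in s_1..s_4 (the even permutations).\<close>
definition A5s :: "(vtx \<times> nat) list set set" where
  "A5s = {cls w | w. w \<in> lists {(Vs, i) | i. i \<in> {1..4}} \<and> even (length w)}"

end

theory Submission
  imports Defs
begin

text \<open>
  Every relator of \<open>G\<close> involves only letters of \<open>A = S\<^sub>5(s)\<close> or only letters of
  \<open>B = \<langle>s\<^sub>4, t\<^sub>1, \<dots>, t\<^sub>4\<rangle>\<close>, so \<open>G\<close> is the free product of \<open>A\<close> and \<open>B\<close> amalgamated
  along \<open>C = \<langle>s\<^sub>4\<rangle>\<close>. Van der Waerden's trick makes \<open>G\<close> act on normal forms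
  \<open>c x\<^sub>1 \<dots> x\<^sub>n\<close> (\<open>c \<in> C\<close>, the \<open>x\<^sub>i\<close> fixed representatives of nontrivial right cosets
  of \<open>C\<close>, alternately in \<open>A\<close> and in \<open>B\<close>); acting on the empty normal form assigns
  to each element a normal form that evaluates to it, and equal elements get equal
  normal forms.

  Let \<open>g\<close> commute with \<open>a\<close>. If \<open>g\<close> has no syllable in \<open>B\<close>, then \<open>g \<in> A\<close>. Otherwise
  \<open>g = p m q\<close> with \<open>p, q \<in> A\<close> and \<open>m\<close> a product of syllables beginning and ending in
  \<open>B\<close>, and \<open>m (q a q\<^sup>-\<^sup>1) = (p\<^sup>-\<^sup>1 a p) m\<close>. The normal form of the left side ends with
  an \<open>A\<close>-syllable and that of the right side with a \<open>B\<close>-syllable, unless a conjugate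
  of \<open>a\<close> lies in \<open>C\<close>. This is impossible: \<open>a \<noteq> 1\<close> is a word of even length, all
  relators have even length, and \<open>s\<^sub>4\<close> has length one.
\<close>

section \<open>The group of words\<close>

type_synonym elem = "(vtx \<times> nat) list set"

abbreviation gmult :: "elem \<Rightarrow> elem \<Rightarrow> elem" (infixl \<open>\<cdot>\<close> 70)
  where "x \<cdot> y \<equiv> x \<otimes>\<^bsub>GC\<^esub> y"

abbreviation idG :: elem
  where "idG \<equiv> \<one>\<^bsub>GC\<^esub>"

abbreviation invG :: "elem \<Rightarrow> elem"
  where "invG x \<equiv> inv\<^bsub>GC\<^esub> x"

lemma Rels_lists_Gens: "r \<in> Rels \<Longrightarrow> r \<in> lists Gens"
  unfolding Rels_def Gens_def by (auto simp: numeral_eq_Suc)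

lemma rstep_appendI:
  "r \<in> Rels \<Longrightarrow> u \<in> lists Gens \<Longrightarrow> v \<in> lists Gens \<Longrightarrow> (u @ r @ v, u @ v) \<in> rstep"
  unfolding rstep_def by blast

lemma rstepE:
  assumes "(x, y) \<in> rstep"
  obtains u r v where "x = u @ r @ v" "y = u @ v" "u \<in> lists Gens" "v \<in> lists Gens" "r \<in> Rels"
  using assms unfolding rstep_def by blast

lemma rstep_lists_Gens:
  assumes "(x, y) \<in> rstep"
  shows "x \<in> lists Gens" "y \<in> lists Gens"
  using assms unfolding rstep_def by (auto dest!: Rels_lists_Gens)

lemma rstep_append_cong:
  assumes "(x, y) \<in> rstep" "p \<in> lists Gens" "q \<in> lists Gens"
  shows "(p @ x @ q, p @ y @ q) \<in> rstep"
proof -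
  obtain u r v where "x = u @ r @ v" "y = u @ v" "u \<in> lists Gens" "v \<in> lists Gens" "r \<in> Rels"
    using assms(1) by (rule rstepE)
  then show ?thesis
    using rstep_appendI[of r "p @ u" "v @ q"] assms(2,3) by simp
qed

lemma equiv_weq: "equiv UNIV weq"
  unfolding weq_def
  by (intro equivI refl_rtrancl sym_rtrancl sym_Un_converse trans_rtrancl) auto

lemma weq_refl [simp]: "(x, x) \<in> weq"
  unfolding weq_def by simp

lemma weq_trans: "(x, y) \<in> weq \<Longrightarrow> (y, z) \<in> weq \<Longrightarrow> (x, z) \<in> weq"
  unfolding weq_def by (rule rtrancl_trans)

lemma rstep_imp_weq: "(x, y) \<in> rstep \<Longrightarrow> (x, y) \<in> weq"
  unfolding weq_def by auto

lemma weq_lists_Gens: "(x, y) \<in> weq \<Longrightarrow> x \<in> lists Gens \<Longrightarrow> y \<in> lists Gens"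
  unfolding weq_def by (induction rule: rtrancl_induct) (auto dest: rstep_lists_Gens)

lemma weq_append_cong:
  "(x, y) \<in> weq \<Longrightarrow> p \<in> lists Gens \<Longrightarrow> q \<in> lists Gens \<Longrightarrow> (p @ x @ q, p @ y @ q) \<in> weq"
  unfolding weq_def
proof (induction rule: rtrancl_induct)
  case (step y z)
  then have "(p @ y @ q, p @ z @ q) \<in> rstep \<union> rstep\<inverse>"
    using rstep_append_cong by blast
  with step show ?case
    by (meson rtrancl.rtrancl_into_rtrancl)
qed simp

lemma weq_append:
  assumes "(x, x') \<in> weq" "(y, y') \<in> weq" "x \<in> lists Gens" "y \<in> lists Gens"
  shows "(x @ y, x' @ y') \<in> weq"
proof -
  have "x' \<in> lists Gens"
    using assms weq_lists_Gens by blast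
  then have "([] @ x @ y, [] @ x' @ y) \<in> weq" "(x' @ y @ [], x' @ y' @ []) \<in> weq"
    using assms weq_append_cong[of x x' "[]" y] weq_append_cong[of y y' x' "[]"] by auto
  then show ?thesis
    using weq_trans by simp
qed

lemma weq_even_length:
  assumes "(x, y) \<in> weq"
  shows "even (length x) \<longleftrightarrow> even (length y)"
proof -
  have rel: "even (length r)" if "r \<in> Rels" for r
    using that unfolding Rels_def by (auto simp: numeral_eq_Suc) presburger+
  have step: "even (length u) \<longleftrightarrow> even (length v)" if "(u, v) \<in> rstep" for u v
    using that rel unfolding rstep_def by auto
  from assms show ?thesis
    unfolding weq_def by (induction rule: rtrancl_induct) (auto dest: step)
qed

lemma mem_cls_iff: "y \<in> cls x \<longleftrightarrow> (x, y) \<in> weq"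
  unfolding cls_def by simp

lemma cls_eq_iff: "cls x = cls y \<longleftrightarrow> (x, y) \<in> weq"
  unfolding cls_def using eq_equiv_class_iff[OF equiv_weq] by blast

lemma carrier_GC: "carrier GC = cls ` lists Gens"
  unfolding GC_def by simp

lemma one_GC: "idG = cls []"
  unfolding GC_def by simp

lemma mult_cls:
  assumes "x \<in> lists Gens" "y \<in> lists Gens"
  shows "cls x \<cdot> cls y = cls (x @ y)"
proof -
  let ?S = "{u @ v | u v. u \<in> cls x \<and> v \<in> cls y}"
  have "?S \<subseteq> cls (x @ y)"
  proof
    fix z
    assume "z \<in> ?S"
    then obtain u v where "z = u @ v" "(x, u) \<in> weq" "(y, v) \<in> weq"
      by (auto simp: mem_cls_iff)
    then show "z \<in> cls (x @ y)"
      using weq_append assms by (simp add: mem_cls_iff)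
  qed
  moreover have "x @ y \<in> ?S"
    unfolding mem_cls_iff using weq_refl by blast
  ultimately have "weq `` ?S = cls (x @ y)"
    unfolding cls_def using weq_trans by blast
  then show ?thesis
    unfolding GC_def by simp
qed

lemma Gens_double_in_Rels: "l \<in> Gens \<Longrightarrow> [l, l] \<in> Rels"
  unfolding Gens_def Rels_def by auto

lemma rev_in_lists_iff [simp]: "rev x \<in> lists A \<longleftrightarrow> x \<in> lists A"
  by (simp add: in_lists_conv_set)

lemma rev_append_weq_Nil: "x \<in> lists Gens \<Longrightarrow> (rev x @ x, []) \<in> weq"
proof (induction x)
  case (Cons l x)
  then have "(rev x @ [l, l] @ x, rev x @ x) \<in> rstep"
    using rstep_appendI[of "[l, l]" "rev x" x] Gens_double_in_Rels[of l] by simp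
  with Cons show ?case
    using rstep_imp_weq weq_trans by fastforce
qed simp

lemma group_GC: "group GC"
proof (rule groupI)
  show "idG \<in> carrier GC"
    unfolding carrier_GC one_GC by blast
next
  fix x y z
  assume "x \<in> carrier GC" "y \<in> carrier GC" "z \<in> carrier GC"
  then obtain u v w where "u \<in> lists Gens" "v \<in> lists Gens" "w \<in> lists Gens"
      and "x = cls u" "y = cls v" "z = cls w"
    unfolding carrier_GC by blast
  then show "x \<cdot> y \<in> carrier GC" "x \<cdot> y \<cdot> z = x \<cdot> (y \<cdot> z)"
    by (simp_all add: mult_cls carrier_GC)
next
  fix x
  assume "x \<in> carrier GC"
  then obtain w where w: "w \<in> lists Gens" "x = cls w"
    unfolding carrier_GC by blast
  then show "idG \<cdot> x = x"
    using mult_cls[of "[]" w] by (simp add: one_GC)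
  have "cls (rev w) \<cdot> x = idG"
    using w rev_append_weq_Nil[of w] by (simp add: mult_cls one_GC cls_eq_iff)
  moreover have "cls (rev w) \<in> carrier GC"
    using w unfolding carrier_GC by auto
  ultimately show "\<exists>y\<in>carrier GC. y \<cdot> x = idG"
    by blast
qed

interpretation G: group GC
  by (rule group_GC)

lemma cls_in_carrier: "w \<in> lists Gens \<Longrightarrow> cls w \<in> carrier GC"
  unfolding carrier_GC by blast

lemma carrier_GC_cases:
  assumes "g \<in> carrier GC"
  obtains w where "g = cls w" "w \<in> lists Gens"
  using assms unfolding carrier_GC by (rule imageE)

lemma inv_cls: "w \<in> lists Gens \<Longrightarrow> invG (cls w) = cls (rev w)"
  using rev_append_weq_Nil[of w] cls_in_carrier[of w] cls_in_carrier[of "rev w"]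
  by (intro G.inv_equality) (simp_all add: mult_cls one_GC cls_eq_iff)

lemma cls_Rels: "r \<in> Rels \<Longrightarrow> cls r = idG"
  using rstep_appendI[of r "[]" "[]"] by (simp add: one_GC cls_eq_iff rstep_imp_weq)


section \<open>The amalgamated subgroup and coset representatives\<close>

definition s4 :: elem
  where "s4 = cls [(Vs, 4)]"

definition amalg :: "elem set"
  where "amalg = {idG, s4}"

lemma s4_Gens: "(Vs, 4) \<in> Gens"
  unfolding Gens_def by simp

lemma s4_closed [simp]: "s4 \<in> carrier GC"
  unfolding s4_def using s4_Gens by (simp add: cls_in_carrier)

lemma s4_mult_s4: "s4 \<cdot> s4 = idG"
  unfolding s4_def using s4_Gens Gens_double_in_Rels cls_Rels by (simp add: mult_cls)

lemma s4_mult_s4_mult: "z \<in> carrier GC \<Longrightarrow> s4 \<cdot> (s4 \<cdot> z) = z"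
  by (simp flip: G.m_assoc add: s4_mult_s4)

lemma inv_s4: "invG s4 = s4"
  by (rule G.inv_equality[OF s4_mult_s4 s4_closed s4_closed])

lemma subgroup_amalg: "subgroup amalg GC"
proof (rule G.subgroupI)
  show "amalg \<subseteq> carrier GC" "amalg \<noteq> {}"
    unfolding amalg_def by auto
  show "invG x \<in> amalg" if "x \<in> amalg" for x
    using that unfolding amalg_def by (elim insertE emptyE) (simp_all add: inv_s4)
  show "x \<cdot> y \<in> amalg" if "x \<in> amalg" "y \<in> amalg" for x y
    using that unfolding amalg_def by (elim insertE emptyE) (simp_all add: s4_mult_s4)
qed

lemma amalg_subset_carrier: "amalg \<subseteq> carrier GC"
  using subgroup.subset[OF subgroup_amalg] .

lemma one_in_amalg: "idG \<in> amalg"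
  unfolding amalg_def by simp

lemma s4_mult_in_amalg_iff:
  assumes "z \<in> carrier GC"
  shows "s4 \<cdot> z \<in> amalg \<longleftrightarrow> z \<in> amalg"
proof -
  have "s4 \<cdot> z = idG \<longleftrightarrow> z = s4" "s4 \<cdot> z = s4 \<longleftrightarrow> z = idG"
    using s4_mult_s4 s4_mult_s4_mult[OF assms] by (metis G.r_one s4_closed)+
  then show ?thesis
    unfolding amalg_def by blast
qed

text \<open>The representative of the right coset \<open>{z, s4 \<cdot> z}\<close> of \<open>amalg\<close> is chosen by
  \<open>SOME\<close> from the coset itself, so it depends only on the coset.\<close>

definition coset_rep :: "elem \<Rightarrow> elem"
  where "coset_rep z = (if z \<in> amalg then idG else SOME t. t \<in> {z, s4 \<cdot> z})"

definition amalg_part :: "elem \<Rightarrow> elem"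
  where "amalg_part z = z \<cdot> invG (coset_rep z)"

lemma coset_rep_cases:
  "z \<in> amalg \<and> coset_rep z = idG \<or> z \<notin> amalg \<and> (coset_rep z = z \<or> coset_rep z = s4 \<cdot> z)"
  unfolding coset_rep_def by (metis (mono_tags) insertCI insertE singletonD someI)

lemma coset_rep_closed: "z \<in> carrier GC \<Longrightarrow> coset_rep z \<in> carrier GC"
  using coset_rep_cases[of z] by auto

lemma coset_rep_eq_one_iff: "z \<in> carrier GC \<Longrightarrow> coset_rep z = idG \<longleftrightarrow> z \<in> amalg"
  using coset_rep_cases[of z] s4_mult_in_amalg_iff one_in_amalg by metis

lemma coset_rep_s4_mult: "z \<in> carrier GC \<Longrightarrow> coset_rep (s4 \<cdot> z) = coset_rep z"
  unfolding coset_rep_def using s4_mult_in_amalg_iff s4_mult_s4_mult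
  by (simp add: insert_commute)

lemma coset_rep_amalg_mult: "c \<in> amalg \<Longrightarrow> z \<in> carrier GC \<Longrightarrow> coset_rep (c \<cdot> z) = coset_rep z"
  unfolding amalg_def using coset_rep_s4_mult by auto

lemma coset_rep_idem:
  assumes "z \<in> carrier GC"
  shows "coset_rep (coset_rep z) = coset_rep z"
  using coset_rep_cases[of z]
proof (elim disjE conjE)
  assume "coset_rep z = idG"
  then show ?thesis
    using one_in_amalg by (simp add: coset_rep_def)
next
  assume "coset_rep z = s4 \<cdot> z"
  then show ?thesis
    using coset_rep_s4_mult[OF assms] by simp
qed simp

lemma amalg_part_mult_coset_rep: "z \<in> carrier GC \<Longrightarrow> amalg_part z \<cdot> coset_rep z = z"
  unfolding amalg_part_def by (simp add: G.m_assoc coset_rep_closed)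

lemma amalg_part_in_amalg: "z \<in> carrier GC \<Longrightarrow> amalg_part z \<in> amalg"
proof -
  assume z: "z \<in> carrier GC"
  consider "coset_rep z = idG" | "coset_rep z = z" | "coset_rep z = s4 \<cdot> z"
    using coset_rep_cases[of z] by blast
  then show ?thesis
  proof cases
    case 1
    then have "z \<in> amalg"
      using z coset_rep_eq_one_iff by blast
    with 1 show ?thesis
      unfolding amalg_part_def using z by simp
  next
    case 2
    then show ?thesis
      unfolding amalg_part_def using z one_in_amalg by simp
  next
    case 3
    then have "amalg_part z = z \<cdot> (invG z \<cdot> invG s4)"
      unfolding amalg_part_def using z by (simp add: G.inv_mult_group)
    also have "\<dots> = s4"
      using z by (simp flip: G.m_assoc add: inv_s4)
    finally show ?thesis
      unfolding amalg_def by simp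
  qed
qed

lemma amalg_part_closed: "z \<in> carrier GC \<Longrightarrow> amalg_part z \<in> carrier GC"
  using amalg_part_in_amalg amalg_subset_carrier by blast


section \<open>The two factors\<close>

text \<open>The tag \<open>False\<close> stands for the factor \<open>S\<^sub>5(s)\<close>, the tag \<open>True\<close> for the factor
  generated by \<open>s\<^sub>4, t\<^sub>1, \<dots>, t\<^sub>4\<close>.\<close>

definition factor_letters :: "bool \<Rightarrow> (vtx \<times> nat) set"
  where "factor_letters b =
    (if b then insert (Vs, 4) {(Vt, i) | i. i \<in> {1..4}} else {(Vs, i) | i. i \<in> {1..4}})"

definition factor :: "bool \<Rightarrow> elem set"
  where "factor b = cls ` lists (factor_letters b)"

lemma factor_letters_subset_Gens: "factor_letters b \<subseteq> Gens"
  unfolding factor_letters_def Gens_def by auto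

lemma factor_letters_lists_Gens: "w \<in> lists (factor_letters b) \<Longrightarrow> w \<in> lists Gens"
  using lists_mono[OF factor_letters_subset_Gens] by blast

lemma letter_in_factor_letters: "l \<in> Gens \<Longrightarrow> l \<in> factor_letters (fst l = Vt)"
  unfolding Gens_def factor_letters_def by (cases "fst l") auto

lemma Rels_in_factor_letters:
  assumes "r \<in> Rels"
  shows "\<exists>b. r \<in> lists (factor_letters b)"
proof -
  have vertex: "r \<in> lists (factor_letters (v = Vt))" if "set r \<subseteq> {(v, i) | i. i \<in> {1..4}}" for v
    using that unfolding factor_letters_def by (cases v) auto
  from assms consider
      (double) v i where "r = [(v, i), (v, i)]" "i \<in> {1..4}"
    | (braid) v i where "r = concat (replicate 3 [(v, i), (v, Suc i)])" "i \<in> {1..3}"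
    | (commute) v i j where "r = concat (replicate 2 [(v, i), (v, j)])" "i \<in> {1..4}" "j \<in> {1..4}"
    | (edge) v w where "r = concat (replicate 2 [(v, 4), (w, 4)])"
    unfolding Rels_def by blast
  then show ?thesis
  proof cases
    case double
    then show ?thesis
      by (intro exI[of _ "v = Vt"] vertex) auto
  next
    case braid
    then show ?thesis
      by (intro exI[of _ "v = Vt"] vertex) (auto simp: numeral_eq_Suc)
  next
    case commute
    then show ?thesis
      by (intro exI[of _ "v = Vt"] vertex) (auto simp: numeral_eq_Suc)
  next
    case edge
    then have "r \<in> lists (factor_letters True)"
      unfolding factor_letters_def by (cases v; cases w) (auto simp: numeral_eq_Suc)
    then show ?thesis
      by blast
  qed
qed

lemma subgroup_factor: "subgroup (factor b) GC"
proof (rule G.subgroupI)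
  show "factor b \<subseteq> carrier GC"
    unfolding factor_def carrier_GC using factor_letters_lists_Gens by blast
  show "factor b \<noteq> {}"
    unfolding factor_def by blast
  show "invG x \<in> factor b" if hx: "x \<in> factor b" for x
  proof -
    obtain w where w: "x = cls w" "w \<in> lists (factor_letters b)"
      using hx unfolding factor_def by (rule imageE)
    then show ?thesis
      unfolding factor_def by (simp add: inv_cls imageI factor_letters_lists_Gens)
  qed
  show "x \<cdot> y \<in> factor b" if hx: "x \<in> factor b" and hy: "y \<in> factor b" for x y
  proof -
    obtain u where u: "x = cls u" "u \<in> lists (factor_letters b)"
      using hx unfolding factor_def by (rule imageE)
    obtain v where v: "y = cls v" "v \<in> lists (factor_letters b)"
      using hy unfolding factor_def by (rule imageE)
    from u v show ?thesis
      unfolding factor_def by (simp add: mult_cls imageI factor_letters_lists_Gens)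
  qed
qed

lemma factor_subset_carrier: "factor b \<subseteq> carrier GC"
  using subgroup.subset[OF subgroup_factor] .

lemma factor_mult_closed: "x \<in> factor b \<Longrightarrow> y \<in> factor b \<Longrightarrow> x \<cdot> y \<in> factor b"
  using subgroup.m_closed[OF subgroup_factor] .

lemma factor_one_closed: "idG \<in> factor b"
  using subgroup.one_closed[OF subgroup_factor] .

lemma letter_in_factor: "l \<in> Gens \<Longrightarrow> cls [l] \<in> factor (fst l = Vt)"
  unfolding factor_def using letter_in_factor_letters by simp

lemma s4_in_factor: "s4 \<in> factor b"
proof -
  have "[(Vs, 4)] \<in> lists (factor_letters b)"
    unfolding factor_letters_def by auto
  then show ?thesis
    unfolding s4_def factor_def by (rule imageI)
qed

lemma amalg_subset_factor: "amalg \<subseteq> factor b"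
  unfolding amalg_def using factor_one_closed s4_in_factor by blast

lemma coset_rep_in_factor: "z \<in> factor b \<Longrightarrow> coset_rep z \<in> factor b"
  using coset_rep_cases[of z] factor_one_closed factor_mult_closed[OF s4_in_factor] by auto

section \<open>Normal forms\<close>

type_synonym syllables = "(bool \<times> elem) list"

definition syllable :: "bool \<times> elem \<Rightarrow> bool"
  where "syllable e \<longleftrightarrow> snd e \<in> factor (fst e) \<and> coset_rep (snd e) = snd e \<and> snd e \<noteq> idG"

fun normal_form :: "elem \<times> syllables \<Rightarrow> bool"
  where "normal_form (c, xs) \<longleftrightarrow>
    c \<in> amalg \<and> distinct_adj (map fst xs) \<and> (\<forall>e\<in>set xs. syllable e)"

definition syllables_prod :: "syllables \<Rightarrow> elem"
  where "syllables_prod xs = foldr (\<lambda>e p. snd e \<cdot> p) xs idG"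

fun nf_eval :: "elem \<times> syllables \<Rightarrow> elem"
  where "nf_eval (c, xs) = c \<cdot> syllables_prod xs"

definition cons_syllable :: "bool \<Rightarrow> elem \<Rightarrow> syllables \<Rightarrow> elem \<times> syllables"
  where "cons_syllable b z ys =
    (amalg_part z, if coset_rep z = idG then ys else (b, coset_rep z) # ys)"

fun factor_act :: "bool \<Rightarrow> elem \<Rightarrow> elem \<times> syllables \<Rightarrow> elem \<times> syllables"
  where
    "factor_act b y (c, (b', t) # ys) =
      (if b' = b then cons_syllable b (y \<cdot> c \<cdot> t) ys else cons_syllable b (y \<cdot> c) ((b', t) # ys))"
  | "factor_act b y (c, []) = cons_syllable b (y \<cdot> c) []"

lemma syllable_closed: "syllable e \<Longrightarrow> snd e \<in> carrier GC"
  unfolding syllable_def using factor_subset_carrier[of "fst e"] by auto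

lemma syllable_notin_amalg: "syllable e \<Longrightarrow> snd e \<notin> amalg"
  unfolding syllable_def coset_rep_def by (cases "snd e \<in> amalg") auto

lemma syllableD:
  assumes "syllable (b, t)"
  shows "t \<in> carrier GC" "t \<in> factor b" "t \<notin> amalg" "coset_rep t = t"
  using syllable_closed[OF assms] syllable_notin_amalg[OF assms] assms
  unfolding syllable_def by simp_all

lemma distinct_adj_map_fst_Cons:
  "distinct_adj (map fst (e # xs)) \<longleftrightarrow> distinct_adj (map fst xs) \<and> (xs = [] \<or> fst (hd xs) \<noteq> fst e)"
  by (cases xs) (auto simp: distinct_adj_Cons)

lemma normal_form_Cons_iff:
  "normal_form (c, e # ys) \<longleftrightarrow> normal_form (c, ys) \<and> syllable e \<and> (ys = [] \<or> fst (hd ys) \<noteq> fst e)"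
  unfolding normal_form.simps distinct_adj_map_fst_Cons by auto

lemma syllables_prod_Nil [simp]: "syllables_prod [] = idG"
  unfolding syllables_prod_def by simp

lemma syllables_prod_Cons [simp]: "syllables_prod (e # xs) = snd e \<cdot> syllables_prod xs"
  unfolding syllables_prod_def by simp

lemma syllables_prod_in_subgroup:
  "subgroup H GC \<Longrightarrow> \<forall>e\<in>set xs. snd e \<in> H \<Longrightarrow> syllables_prod xs \<in> H"
  by (induction xs) (auto intro: subgroup.one_closed subgroup.m_closed)

lemma syllables_prod_closed: "\<forall>e\<in>set xs. snd e \<in> carrier GC \<Longrightarrow> syllables_prod xs \<in> carrier GC"
  using syllables_prod_in_subgroup[OF G.subgroup_self] .

lemma syllables_prod_append:
  "\<forall>e\<in>set xs. snd e \<in> carrier GC \<Longrightarrow> \<forall>e\<in>set ys. snd e \<in> carrier GC \<Longrightarrow>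
    syllables_prod (xs @ ys) = syllables_prod xs \<cdot> syllables_prod ys"
  by (induction xs) (auto simp: G.m_assoc syllables_prod_closed)

lemma normal_form_syllables_closed: "normal_form (c, xs) \<Longrightarrow> \<forall>e\<in>set xs. snd e \<in> carrier GC"
  using syllable_closed by auto

lemma normal_form_amalg_closed: "normal_form (c, xs) \<Longrightarrow> c \<in> carrier GC"
  using amalg_subset_carrier by auto

lemma nf_eval_closed: "normal_form x \<Longrightarrow> nf_eval x \<in> carrier GC"
proof (cases x)
  case (Pair c xs)
  moreover assume "normal_form x"
  ultimately have "c \<in> carrier GC" "syllables_prod xs \<in> carrier GC"
    using normal_form_amalg_closed normal_form_syllables_closed syllables_prod_closed by blast+
  with Pair show ?thesis
    by simp
qed

lemma factor_act_other_lead: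
  "ys = [] \<or> fst (hd ys) \<noteq> b \<Longrightarrow> factor_act b y (c, ys) = cons_syllable b (y \<cdot> c) ys"
  by (cases "(b, y, (c, ys))" rule: factor_act.cases) auto

lemma cons_syllable_trivial: "z \<in> amalg \<Longrightarrow> cons_syllable b z ys = (z, ys)"
  unfolding cons_syllable_def amalg_part_def coset_rep_def using amalg_subset_carrier by auto

lemma cons_syllable_nontrivial:
  "z \<in> carrier GC \<Longrightarrow> z \<notin> amalg \<Longrightarrow>
    cons_syllable b z ys = (amalg_part z, (b, coset_rep z) # ys)"
  unfolding cons_syllable_def using coset_rep_eq_one_iff by simp

lemma factor_act_cons_syllable:
  assumes "ys = [] \<or> fst (hd ys) \<noteq> b" "z \<in> carrier GC" "y \<in> carrier GC"
  shows "factor_act b y (cons_syllable b z ys) = cons_syllable b (y \<cdot> z) ys"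
proof (cases "z \<in> amalg")
  case True
  then show ?thesis
    using assms by (simp add: cons_syllable_trivial factor_act_other_lead)
next
  case False
  have "y \<cdot> amalg_part z \<cdot> coset_rep z = y \<cdot> z"
    using assms(2,3)
    by (simp add: G.m_assoc coset_rep_closed amalg_part_closed amalg_part_mult_coset_rep)
  with False assms(2) show ?thesis
    by (simp add: cons_syllable_nontrivial)
qed

lemma factor_act_mult:
  assumes "normal_form x" "y1 \<in> carrier GC" "y2 \<in> carrier GC"
  shows "factor_act b y1 (factor_act b y2 x) = factor_act b (y1 \<cdot> y2) x"
proof -
  obtain c xs where x: "x = (c, xs)"
    by fastforce
  have c: "c \<in> carrier GC"
    using assms(1) x normal_form_amalg_closed by blast
  show ?thesis
  proof (cases "xs \<noteq> [] \<and> fst (hd xs) = b")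
    case True
    then obtain t ys where xs: "xs = (b, t) # ys"
      by (cases xs) auto
    have "ys = [] \<or> fst (hd ys) \<noteq> b" "t \<in> carrier GC"
      using assms(1) syllable_closed unfolding x xs normal_form_Cons_iff by auto
    with xs x c assms(2,3) show ?thesis
      by (simp add: factor_act_cons_syllable G.m_assoc)
  next
    case False
    with x c assms(2,3) show ?thesis
      by (auto simp: factor_act_other_lead factor_act_cons_syllable G.m_assoc)
  qed
qed

lemma factor_act_amalg:
  assumes "normal_form (c, xs)" "c' \<in> amalg"
  shows "factor_act b c' (c, xs) = (c' \<cdot> c, xs)"
proof -
  have cc: "c' \<cdot> c \<in> amalg"
    using assms subgroup.m_closed[OF subgroup_amalg] by simp
  then have cc_closed: "c' \<cdot> c \<in> carrier GC"
    using amalg_subset_carrier by blast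
  show ?thesis
  proof (cases "xs = [] \<or> fst (hd xs) \<noteq> b")
    case True
    then show ?thesis
      using cc by (simp add: factor_act_other_lead cons_syllable_trivial)
  next
    case False
    then obtain t ys where xs: "xs = (b, t) # ys"
      by (cases xs) auto
    have "syllable (b, t)"
      using assms(1) xs by simp
    then have t_closed: "t \<in> carrier GC" and "t \<notin> amalg" and t_rep: "coset_rep t = t"
      by (simp_all add: syllableD)
    then have "t \<noteq> idG"
      using one_in_amalg by metis
    have rep: "coset_rep (c' \<cdot> c \<cdot> t) = t"
      using coset_rep_amalg_mult[OF cc t_closed] t_rep by simp
    with \<open>t \<noteq> idG\<close> have "c' \<cdot> c \<cdot> t \<notin> amalg"
      using coset_rep_eq_one_iff cc_closed t_closed by (metis G.m_closed)
    moreover have "amalg_part (c' \<cdot> c \<cdot> t) = c' \<cdot> c"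
      unfolding amalg_part_def rep using cc_closed t_closed by (simp add: G.m_assoc)
    ultimately show ?thesis
      using xs rep cc_closed t_closed by (simp add: cons_syllable_nontrivial)
  qed
qed

lemma factor_act_one: "normal_form x \<Longrightarrow> factor_act b idG x = x"
  using factor_act_amalg[OF _ one_in_amalg] normal_form_amalg_closed by (cases x) auto

lemma normal_form_cons_syllable:
  assumes "z \<in> factor b" "normal_form (c, ys)" "ys = [] \<or> fst (hd ys) \<noteq> b"
  shows "normal_form (cons_syllable b z ys)"
proof -
  have z: "z \<in> carrier GC"
    using assms(1) factor_subset_carrier by blast
  have "syllable (b, coset_rep z)" if "coset_rep z \<noteq> idG"
    using that coset_rep_in_factor[OF assms(1)] coset_rep_idem[OF z] by (simp add: syllable_def)
  moreover have "normal_form (amalg_part z, ys)"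
    using assms(2) amalg_part_in_amalg[OF z] by simp
  ultimately show ?thesis
    unfolding cons_syllable_def using assms(3)
    by (auto simp: normal_form_Cons_iff simp del: normal_form.simps)
qed

lemma normal_form_factor_act:
  assumes "normal_form x" "y \<in> factor b"
  shows "normal_form (factor_act b y x)"
proof -
  obtain c xs where x: "x = (c, xs)"
    by fastforce
  have c: "c \<in> factor b"
    using assms(1) x amalg_subset_factor by auto
  show ?thesis
  proof (cases "xs \<noteq> [] \<and> fst (hd xs) = b")
    case True
    then obtain t ys where xs: "xs = (b, t) # ys"
      by (cases xs) auto
    have "t \<in> factor b" "normal_form (c, ys)" "ys = [] \<or> fst (hd ys) \<noteq> b"
      using assms(1) unfolding x xs normal_form_Cons_iff syllable_def by auto
    with x xs c assms(2) show ?thesis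
      by (simp add: normal_form_cons_syllable factor_mult_closed del: normal_form.simps)
  next
    case False
    with x c assms show ?thesis
      by (simp add: factor_act_other_lead normal_form_cons_syllable factor_mult_closed
          del: normal_form.simps)
  qed
qed

lemma nf_eval_cons_syllable:
  assumes "z \<in> carrier GC" "\<forall>e\<in>set ys. snd e \<in> carrier GC"
  shows "nf_eval (cons_syllable b z ys) = z \<cdot> syllables_prod ys"
proof (cases "z \<in> amalg")
  case True
  then show ?thesis
    by (simp add: cons_syllable_trivial)
next
  case False
  then have "nf_eval (cons_syllable b z ys) = amalg_part z \<cdot> (coset_rep z \<cdot> syllables_prod ys)"
    using assms(1) by (simp add: cons_syllable_nontrivial)
  also have "\<dots> = z \<cdot> syllables_prod ys"
    using assms by (simp add: amalg_part_mult_coset_rep amalg_part_closed coset_rep_closed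
        syllables_prod_closed flip: G.m_assoc)
  finally show ?thesis .
qed

lemma nf_eval_factor_act:
  assumes "normal_form x" "y \<in> carrier GC"
  shows "nf_eval (factor_act b y x) = y \<cdot> nf_eval x"
proof -
  obtain c xs where x: "x = (c, xs)"
    by fastforce
  have c: "c \<in> carrier GC" and xs: "\<forall>e\<in>set xs. snd e \<in> carrier GC"
    using assms(1) x normal_form_amalg_closed normal_form_syllables_closed by blast+
  show ?thesis
  proof (cases "xs \<noteq> [] \<and> fst (hd xs) = b")
    case True
    then obtain t ys where "xs = (b, t) # ys"
      by (cases xs) auto
    with x c xs assms(2) show ?thesis
      by (simp add: nf_eval_cons_syllable syllables_prod_closed G.m_assoc)
  next
    case False
    with x c xs assms(2) show ?thesis
      by (simp add: factor_act_other_lead nf_eval_cons_syllable syllables_prod_closed G.m_assoc)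
  qed
qed

section \<open>The action of the whole group on normal forms\<close>

definition letter_act :: "vtx \<times> nat \<Rightarrow> elem \<times> syllables \<Rightarrow> elem \<times> syllables"
  where "letter_act l = factor_act (fst l = Vt) (cls [l])"

definition word_act :: "(vtx \<times> nat) list \<Rightarrow> elem \<times> syllables \<Rightarrow> elem \<times> syllables"
  where "word_act w = foldr letter_act w"

lemma word_act_Nil [simp]: "word_act [] x = x"
  unfolding word_act_def by simp

lemma word_act_Cons [simp]: "word_act (l # w) x = letter_act l (word_act w x)"
  unfolding word_act_def by simp

lemma word_act_append: "word_act (u @ v) x = word_act u (word_act v x)"
  unfolding word_act_def by simp

lemma normal_form_word_act: "w \<in> lists Gens \<Longrightarrow> normal_form x \<Longrightarrow> normal_form (word_act w x)"
proof (induction w)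
  case (Cons l w)
  then show ?case
    unfolding word_act_Cons letter_act_def
    by (intro normal_form_factor_act letter_in_factor) simp_all
qed simp

lemma nf_eval_word_act:
  "w \<in> lists Gens \<Longrightarrow> normal_form x \<Longrightarrow> nf_eval (word_act w x) = cls w \<cdot> nf_eval x"
proof (induction w)
  case Nil
  then show ?case
    using nf_eval_closed by (simp flip: one_GC)
next
  case (Cons l w)
  then have l: "[l] \<in> lists Gens" and w: "w \<in> lists Gens"
    by simp_all
  have "nf_eval (word_act (l # w) x) = cls [l] \<cdot> (cls w \<cdot> nf_eval x)"
    using Cons w l by (simp add: letter_act_def nf_eval_factor_act normal_form_word_act cls_in_carrier)
  also have "\<dots> = (cls [l] \<cdot> cls w) \<cdot> nf_eval x"
    using Cons.prems(2) l w by (simp add: G.m_assoc cls_in_carrier nf_eval_closed)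
  also have "\<dots> = cls (l # w) \<cdot> nf_eval x"
    using l w by (simp add: mult_cls)
  finally show ?case .
qed

lemma factor_act_amalg_eq:
  assumes "normal_form x" "c \<in> amalg"
  shows "factor_act b c x = factor_act b' c x"
proof (cases x)
  case (Pair c0 xs)
  with assms show ?thesis
    using factor_act_amalg[of c0 xs c] by simp
qed

text \<open>The letter \<open>s\<^sub>4\<close> lies in both factors, but it acts in the same way through
  either of them because it lies in \<open>amalg\<close>.\<close>

lemma word_act_factor:
  "w \<in> lists (factor_letters b) \<Longrightarrow> normal_form x \<Longrightarrow> word_act w x = factor_act b (cls w) x"
proof (induction w)
  case Nil
  then show ?case
    using factor_act_one by (simp flip: one_GC)
next
  case (Cons l w)
  then have l: "l \<in> factor_letters b" and w: "w \<in> lists (factor_letters b)"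
    by simp_all
  have lw: "[l] \<in> lists Gens" "w \<in> lists Gens"
    using factor_letters_lists_Gens[of "[l]"] factor_letters_lists_Gens[OF w] l by simp_all
  have nf: "normal_form (factor_act b (cls w) x)"
    using normal_form_factor_act[OF Cons.prems(2)] w unfolding factor_def by simp
  have "letter_act l (factor_act b (cls w) x) = factor_act b (cls [l]) (factor_act b (cls w) x)"
  proof (cases "(fst l = Vt) = b")
    case False
    with l have "l = (Vs, 4)"
      unfolding factor_letters_def by (auto split: if_splits)
    then have "cls [l] \<in> amalg"
      unfolding amalg_def s4_def by simp
    with nf show ?thesis
      unfolding letter_act_def by (rule factor_act_amalg_eq)
  qed (simp add: letter_act_def)
  also have "\<dots> = factor_act b (cls (l # w)) x"
    using factor_act_mult[OF Cons.prems(2)] lw by (simp add: cls_in_carrier mult_cls)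
  finally show ?case
    using Cons.IH[OF w Cons.prems(2)] by simp
qed

lemma word_act_Rels:
  assumes "r \<in> Rels" "normal_form x"
  shows "word_act r x = x"
proof -
  obtain b where "r \<in> lists (factor_letters b)"
    using Rels_in_factor_letters[OF assms(1)] by blast
  then have "word_act r x = factor_act b (cls r) x"
    using assms(2) by (rule word_act_factor)
  with assms show ?thesis
    by (simp add: cls_Rels factor_act_one)
qed

lemma word_act_weq:
  assumes "(y, z) \<in> weq" "normal_form x"
  shows "word_act y x = word_act z x"
proof -
  have rstep_inv: "word_act u x = word_act v x" if uv: "(u, v) \<in> rstep" for u v
  proof -
    obtain p r q where "u = p @ r @ q" "v = p @ q" "p \<in> lists Gens" "q \<in> lists Gens" "r \<in> Rels"
      using uv by (rule rstepE)
    then show ?thesis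
      using assms(2) by (simp add: word_act_append word_act_Rels normal_form_word_act)
  qed
  from assms(1) show ?thesis
    unfolding weq_def
  proof (induction rule: rtrancl_induct)
    case (step u v)
    from step.hyps(2) have "word_act u x = word_act v x"
      using rstep_inv[of u v] rstep_inv[of v u] by (metis UnE converseD)
    with step.IH show ?case
      by simp
  qed simp
qed

definition nf_act :: "elem \<Rightarrow> elem \<times> syllables \<Rightarrow> elem \<times> syllables"
  where "nf_act g = word_act (SOME w. w \<in> lists Gens \<and> cls w = g)"

lemma nf_act_cls:
  assumes "w \<in> lists Gens" "normal_form x"
  shows "nf_act (cls w) x = word_act w x"
proof -
  let ?w = "SOME w'. w' \<in> lists Gens \<and> cls w' = cls w"
  have "?w \<in> lists Gens \<and> cls ?w = cls w"
    using assms(1) by (intro someI) simp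
  then have "(?w, w) \<in> weq"
    by (simp add: cls_eq_iff)
  then show ?thesis
    unfolding nf_act_def using word_act_weq assms(2) by blast
qed

lemma normal_form_nf_act: "g \<in> carrier GC \<Longrightarrow> normal_form x \<Longrightarrow> normal_form (nf_act g x)"
  by (metis carrier_GC_cases nf_act_cls normal_form_word_act)

lemma nf_eval_nf_act: "g \<in> carrier GC \<Longrightarrow> normal_form x \<Longrightarrow> nf_eval (nf_act g x) = g \<cdot> nf_eval x"
  by (metis carrier_GC_cases nf_act_cls nf_eval_word_act)

lemma nf_act_mult:
  assumes "g \<in> carrier GC" "h \<in> carrier GC" "normal_form x"
  shows "nf_act (g \<cdot> h) x = nf_act g (nf_act h x)"
proof -
  obtain u v where "g = cls u" "u \<in> lists Gens" "h = cls v" "v \<in> lists Gens"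
    using assms(1,2) carrier_GC_cases by metis
  with assms(3) show ?thesis
    by (simp add: mult_cls nf_act_cls word_act_append normal_form_word_act)
qed

lemma nf_act_factor:
  assumes "y \<in> factor b" "normal_form x"
  shows "nf_act y x = factor_act b y x"
proof -
  obtain w where "y = cls w" "w \<in> lists (factor_letters b)"
    using assms(1) unfolding factor_def by (rule imageE)
  with assms(2) show ?thesis
    by (simp add: nf_act_cls word_act_factor factor_letters_lists_Gens)
qed

section \<open>Centralizers of elements of the first factor\<close>

lemma nf_act_one: "normal_form x \<Longrightarrow> nf_act idG x = x"
  using nf_act_cls[of "[]"] by (simp flip: one_GC)

lemma nf_act_syllables_prod:
  "normal_form (idG, xs) \<Longrightarrow> nf_act (syllables_prod xs) (idG, []) = (idG, xs)"
proof (induction xs)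
  case Nil
  then show ?case
    by (simp add: nf_act_one)
next
  case (Cons e ys)
  obtain b t where e: "e = (b, t)"
    by fastforce
  from Cons.prems have ys: "normal_form (idG, ys)" and lead: "ys = [] \<or> fst (hd ys) \<noteq> b"
      and t: "syllable (b, t)"
    unfolding e normal_form_Cons_iff by auto
  then have tc: "t \<in> carrier GC" "t \<in> factor b" "t \<notin> amalg" "coset_rep t = t"
    by (simp_all add: syllableD)
  have "normal_form (idG, [])"
    using one_in_amalg by simp
  moreover have "syllables_prod ys \<in> carrier GC"
    using ys normal_form_syllables_closed syllables_prod_closed by blast
  ultimately have "nf_act (syllables_prod (e # ys)) (idG, []) =
      nf_act t (nf_act (syllables_prod ys) (idG, []))"
    using e tc(1) by (simp add: nf_act_mult)
  also have "\<dots> = factor_act b t (idG, ys)"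
    using Cons.IH[OF ys] nf_act_factor[OF tc(2) ys] by simp
  also have "\<dots> = (idG, (b, t) # ys)"
    using lead tc by (simp add: factor_act_other_lead cons_syllable_nontrivial amalg_part_def)
  finally show ?case
    using e by simp
qed

lemma normal_form_exists:
  assumes "g \<in> carrier GC"
  obtains c xs where "normal_form (c, xs)" "g = nf_eval (c, xs)"
proof -
  have "normal_form (idG, [])"
    using one_in_amalg by simp
  then have "normal_form (nf_act g (idG, []))" "nf_eval (nf_act g (idG, [])) = g"
    using assms by (simp_all add: normal_form_nf_act nf_eval_nf_act del: normal_form.simps)
  then show ?thesis
    using that by (metis prod.collapse)
qed

lemma nf_act_keeps_suffix:
  assumes "normal_form (c, ys)" "ys \<noteq> []"
  shows "distinct_adj (map fst (ms @ ys)) \<Longrightarrow> \<forall>e\<in>set ms. syllable e \<Longrightarrow>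
    \<exists>c' zs. nf_act (syllables_prod ms) (c, ys) = (c', zs @ ys) \<and> map fst zs = map fst ms"
proof (induction ms)
  case Nil
  then show ?case
    using assms(1) by (simp add: nf_act_one del: normal_form.simps)
next
  case (Cons e ms)
  obtain b t where e: "e = (b, t)"
    by fastforce
  have t: "syllable (b, t)" and ms: "\<forall>e\<in>set ms. syllable e"
    using Cons.prems(2) e by simp_all
  have adj: "distinct_adj (map fst (ms @ ys))" and lead: "fst (hd (ms @ ys)) \<noteq> b"
    using Cons.prems(1) assms(2) unfolding e append_Cons distinct_adj_map_fst_Cons by simp_all
  obtain c' zs where IH: "nf_act (syllables_prod ms) (c, ys) = (c', zs @ ys)"
      "map fst zs = map fst ms"
    using Cons.IH[OF adj ms] by blast
  have prod: "syllables_prod ms \<in> carrier GC"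
    using ms syllable_closed syllables_prod_closed by blast
  have nf: "normal_form (c', zs @ ys)"
    using normal_form_nf_act[OF prod assms(1)] IH(1) by simp
  then have c': "c' \<in> amalg"
    by simp
  then have c'_closed: "c' \<in> carrier GC"
    using amalg_subset_carrier by blast
  have "fst (hd (zs @ ys)) = fst (hd (ms @ ys))"
    using IH(2) by (cases zs; cases ms) auto
  with lead have lead': "zs @ ys = [] \<or> fst (hd (zs @ ys)) \<noteq> b"
    by simp
  have tc: "t \<in> carrier GC" "t \<in> factor b" "t \<notin> amalg"
    using t by (simp_all add: syllableD)
  have "t \<cdot> c' \<notin> amalg"
  proof
    assume "t \<cdot> c' \<in> amalg"
    with c' have "t \<cdot> c' \<cdot> invG c' \<in> amalg"
      by (simp add: subgroup.m_closed[OF subgroup_amalg] subgroup.m_inv_closed[OF subgroup_amalg])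
    with tc(1,3) c'_closed show False
      by (simp add: G.m_assoc)
  qed
  with tc(1,2) c'_closed nf lead' have "nf_act t (c', zs @ ys) =
      (amalg_part (t \<cdot> c'), ((b, coset_rep (t \<cdot> c')) # zs) @ ys)"
    by (simp add: nf_act_factor factor_act_other_lead cons_syllable_nontrivial del: normal_form.simps)
  moreover have "nf_act (syllables_prod (e # ms)) (c, ys) = nf_act t (c', zs @ ys)"
    using e IH(1) tc(1) prod assms(1) by (simp add: nf_act_mult del: normal_form.simps)
  ultimately show ?case
    using e IH(2)
    by (intro exI[of _ "amalg_part (t \<cdot> c')"] exI[of _ "(b, coset_rep (t \<cdot> c')) # zs"]) simp
qed

lemma prod_mult_ne_mult_prod:
  assumes ms: "normal_form (idG, ms)" "ms \<noteq> []" "fst (hd ms)" "fst (last ms)"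
    and a1: "a1 \<in> factor False" "a1 \<notin> amalg"
    and a2: "a2 \<in> factor False" "a2 \<notin> amalg"
  shows "syllables_prod ms \<cdot> a1 \<noteq> a2 \<cdot> syllables_prod ms"
proof
  define m where "m = syllables_prod ms"
  have m: "m \<in> carrier GC"
    unfolding m_def using ms(1) normal_form_syllables_closed syllables_prod_closed by blast
  have a: "a1 \<in> carrier GC" "a2 \<in> carrier GC"
    using subsetD[OF factor_subset_carrier a1(1)] subsetD[OF factor_subset_carrier a2(1)] .
  have nf0: "normal_form (idG, [])"
    using one_in_amalg by simp
  have "nf_act (a2 \<cdot> m) (idG, []) = factor_act False a2 (idG, ms)"
    using a(2) m ms(1) nf0 a2(1) unfolding m_def
    by (simp add: nf_act_mult nf_act_syllables_prod nf_act_factor del: normal_form.simps)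
  also have "\<dots> = (amalg_part a2, (False, coset_rep a2) # ms)"
    using ms(2,3) a(2) a2(2) by (simp add: factor_act_other_lead cons_syllable_nontrivial)
  finally have left: "nf_act (a2 \<cdot> m) (idG, []) = (amalg_part a2, (False, coset_rep a2) # ms)" .
  have y: "nf_act a1 (idG, []) = (amalg_part a1, [(False, coset_rep a1)])"
    using nf0 a1 a(1) by (simp add: nf_act_factor cons_syllable_nontrivial del: normal_form.simps)
  then have "normal_form (amalg_part a1, [(False, coset_rep a1)])"
    using normal_form_nf_act[OF a(1) nf0] by simp
  moreover have "distinct_adj (map fst (ms @ [(False, coset_rep a1)]))"
    using ms by (simp add: distinct_adj_append_iff last_map)
  moreover have "\<forall>e\<in>set ms. syllable e"
    using ms(1) by simp
  ultimately obtain c' zs where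
    "nf_act m (amalg_part a1, [(False, coset_rep a1)]) = (c', zs @ [(False, coset_rep a1)])"
    using nf_act_keeps_suffix[of "amalg_part a1" "[(False, coset_rep a1)]" ms] unfolding m_def
    by blast
  then have right: "nf_act (m \<cdot> a1) (idG, []) = (c', zs @ [(False, coset_rep a1)])"
    using y m a(1) nf0 by (simp add: nf_act_mult del: normal_form.simps)
  assume "syllables_prod ms \<cdot> a1 = a2 \<cdot> syllables_prod ms"
  then have "(False, coset_rep a2) # ms = zs @ [(False, coset_rep a1)]"
    using left right unfolding m_def by simp
  then have "last ((False, coset_rep a2) # ms) = (False, coset_rep a1)"
    by simp
  with ms(2,4) show False
    by simp
qed

lemma split_list_first_last_propE:
  assumes "\<exists>x\<in>set xs. P x"
  obtains ys zs us where "xs = ys @ zs @ us" "zs \<noteq> []" "P (hd zs)" "P (last zs)"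
    "\<forall>y\<in>set ys. \<not> P y" "\<forall>u\<in>set us. \<not> P u"
proof -
  obtain ys x rest where xs: "xs = ys @ x # rest" "P x" "\<forall>y\<in>set ys. \<not> P y"
    using split_list_first_propE[OF assms] by blast
  obtain zs z us where rest: "x # rest = zs @ z # us" "P z" "\<forall>u\<in>set us. \<not> P u"
    using split_list_last_propE[of "x # rest" P] xs(2) by auto
  have "hd (zs @ [z]) = x"
    using rest(1) by (cases zs) auto
  with xs rest that[of ys "zs @ [z]" us] show ?thesis
    by simp
qed

lemma syllables_prod_in_factor: "\<forall>e\<in>set xs. syllable e \<and> fst e = b \<Longrightarrow> syllables_prod xs \<in> factor b"
  by (rule syllables_prod_in_subgroup[OF subgroup_factor]) (auto simp: syllable_def)

lemma normal_form_factor_decomposition: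
  assumes nf: "normal_form (c, xs)" and B: "\<exists>e\<in>set xs. fst e"
  obtains p ms q where "p \<in> factor False" "q \<in> factor False"
    "normal_form (idG, ms)" "ms \<noteq> []" "fst (hd ms)" "fst (last ms)"
    "nf_eval (c, xs) = p \<cdot> syllables_prod ms \<cdot> q"
proof -
  obtain pre ms suf where xs: "xs = pre @ ms @ suf" "ms \<noteq> []" "fst (hd ms)" "fst (last ms)"
      "\<forall>e\<in>set pre. \<not> fst e" "\<forall>e\<in>set suf. \<not> fst e"
    using split_list_first_last_propE[OF B] by blast
  have syl: "\<forall>e\<in>set xs. syllable e" and c: "c \<in> factor False"
    using nf amalg_subset_factor by auto
  have pre: "syllables_prod pre \<in> factor False" and suf: "syllables_prod suf \<in> factor False"
    using xs(1,5,6) syl by (auto intro!: syllables_prod_in_factor)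
  have "normal_form (idG, ms)"
    using nf one_in_amalg unfolding xs(1) by (auto simp: distinct_adj_append_iff)
  moreover have "nf_eval (c, xs) = (c \<cdot> syllables_prod pre) \<cdot> syllables_prod ms \<cdot> syllables_prod suf"
  proof -
    have "\<forall>e\<in>set xs. snd e \<in> carrier GC" "c \<in> carrier GC"
      using nf normal_form_syllables_closed normal_form_amalg_closed by blast+
    with xs(1) show ?thesis
      by (simp add: syllables_prod_append syllables_prod_closed G.m_assoc)
  qed
  ultimately show ?thesis
    using that[of "c \<cdot> syllables_prod pre"] xs(2-4) c pre suf factor_mult_closed by blast
qed

lemma (in group) commute_imp_conj_intertwines:
  assumes "p \<in> carrier G" "m \<in> carrier G" "q \<in> carrier G" "a \<in> carrier G"
    and "p \<otimes> m \<otimes> q \<otimes> a = a \<otimes> (p \<otimes> m \<otimes> q)"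
  shows "m \<otimes> (q \<otimes> a \<otimes> inv q) = (inv p \<otimes> a \<otimes> p) \<otimes> m"
proof -
  have "m \<otimes> (q \<otimes> a \<otimes> inv q) = inv p \<otimes> (p \<otimes> m \<otimes> q \<otimes> a) \<otimes> inv q"
    using assms(1-4) by (simp add: m_assoc flip: inv_solve_left)
  also have "\<dots> = inv p \<otimes> (a \<otimes> (p \<otimes> m \<otimes> q)) \<otimes> inv q"
    using assms(5) by simp
  also have "\<dots> = (inv p \<otimes> a \<otimes> p) \<otimes> m"
    using assms(1-4) by (simp add: m_assoc)
  finally show ?thesis .
qed

lemma centralizer_subset_factor:
  assumes a: "a \<in> factor False"
    and conj: "\<And>p. p \<in> factor False \<Longrightarrow> invG p \<cdot> a \<cdot> p \<notin> amalg"
    and g: "g \<in> carrier GC" "g \<cdot> a = a \<cdot> g"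
  shows "g \<in> factor False"
proof -
  obtain c xs where nf: "normal_form (c, xs)" and g_eq: "g = nf_eval (c, xs)"
    using normal_form_exists[OF g(1)] .
  show ?thesis
  proof (cases "\<exists>e\<in>set xs. fst e")
    case False
    with nf have "syllables_prod xs \<in> factor False"
      by (auto intro!: syllables_prod_in_factor)
    moreover have "c \<in> factor False"
      using nf amalg_subset_factor by auto
    ultimately show ?thesis
      using g_eq factor_mult_closed by simp
  next
    case True
    then obtain p ms q where pq: "p \<in> factor False" "q \<in> factor False"
        and ms: "normal_form (idG, ms)" "ms \<noteq> []" "fst (hd ms)" "fst (last ms)"
        and g_pmq: "g = p \<cdot> syllables_prod ms \<cdot> q"
      using normal_form_factor_decomposition nf g_eq by metis
    have closed: "p \<in> carrier GC" "q \<in> carrier GC" "a \<in> carrier GC" "invG q \<in> factor False"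
        "syllables_prod ms \<in> carrier GC"
      using pq a ms(1) factor_subset_carrier subgroup.m_inv_closed[OF subgroup_factor]
        normal_form_syllables_closed syllables_prod_closed by auto
    have "syllables_prod ms \<cdot> (q \<cdot> a \<cdot> invG q) = (invG p \<cdot> a \<cdot> p) \<cdot> syllables_prod ms"
      using G.commute_imp_conj_intertwines closed g(2) g_pmq by blast
    moreover have "q \<cdot> a \<cdot> invG q \<notin> amalg"
      using conj[OF closed(4)] closed by simp
    moreover have "invG p \<cdot> a \<cdot> p \<notin> amalg"
      using conj[OF pq(1)] .
    ultimately show ?thesis
      using prod_mult_ne_mult_prod[OF ms] pq a closed subgroup.m_inv_closed[OF subgroup_factor]
        factor_mult_closed by metis
  qed
qed

lemma conj_even_word_notin_amalg:
  assumes w: "w \<in> lists Gens" "even (length w)" "cls w \<noteq> idG" and p: "p \<in> carrier GC"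
  shows "invG p \<cdot> cls w \<cdot> p \<notin> amalg"
proof
  obtain v where v: "v \<in> lists Gens" "p = cls v"
    using carrier_GC_cases[OF p] .
  have conj: "invG p \<cdot> cls w \<cdot> p = cls (rev v @ w @ v)"
    using v w(1) by (simp add: inv_cls mult_cls)
  assume "invG p \<cdot> cls w \<cdot> p \<in> amalg"
  then consider "invG p \<cdot> cls w \<cdot> p = idG" | "invG p \<cdot> cls w \<cdot> p = s4"
    unfolding amalg_def by blast
  then show False
  proof cases
    case 1
    have "cls w = p \<cdot> (invG p \<cdot> cls w \<cdot> p) \<cdot> invG p"
      using p w(1) cls_in_carrier by (simp add: G.m_assoc flip: G.inv_solve_left)
    with 1 w(3) p show False
      by simp
  next
    case 2
    then have "(rev v @ w @ v, [(Vs, 4)]) \<in> weq"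
      unfolding conj s4_def cls_eq_iff .
    then show False
      using weq_even_length w(2) by fastforce
  qed
qed

lemma factor_False_subset_S5s: "factor False \<subseteq> S5s"
proof -
  have "cls w \<in> S5s" if "w \<in> lists (factor_letters False)" for w
    using that
  proof (induction w)
    case Nil
    then show ?case
      unfolding S5s_def using generate.one[of GC] by (simp add: one_GC)
  next
    case (Cons l w)
    then have "cls [l] \<in> S5s" "[l] \<in> lists Gens" "w \<in> lists Gens"
      unfolding S5s_def factor_letters_def Gens_def by (auto intro: generate.incl)
    moreover have "cls w \<in> S5s"
      using Cons by simp
    ultimately show ?case
      unfolding S5s_def using generate.eng[of "cls [l]" GC _ "cls w"] by (simp add: mult_cls)
  qed
  then show ?thesis
    unfolding factor_def by blast
qed

theorem lemma4p24:
  assumes "a \<in> A5s"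
    and "a \<otimes>\<^bsub>GC\<^esub> a = \<one>\<^bsub>GC\<^esub>"
    and "a \<noteq> \<one>\<^bsub>GC\<^esub>"
  shows "{g \<in> carrier GC. g \<otimes>\<^bsub>GC\<^esub> a = a \<otimes>\<^bsub>GC\<^esub> g} \<subseteq> S5s"
proof
  fix g
  assume "g \<in> {g \<in> carrier GC. g \<otimes>\<^bsub>GC\<^esub> a = a \<otimes>\<^bsub>GC\<^esub> g}"
  then have g: "g \<in> carrier GC" "g \<cdot> a = a \<cdot> g"
    by auto
  obtain w where w: "w \<in> lists (factor_letters False)" "even (length w)" "a = cls w"
    using assms(1) unfolding A5s_def factor_letters_def by auto
  then have "a \<in> factor False"
    unfolding factor_def by blast
  moreover have "invG p \<cdot> a \<cdot> p \<notin> amalg" if "p \<in> factor False" for p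
    using conj_even_word_notin_amalg w assms(3) that factor_letters_subset_Gens factor_subset_carrier
    by blast
  ultimately have "g \<in> factor False"
    using centralizer_subset_factor g by blast
  then show "g \<in> S5s"
    using factor_False_subset_S5s by blast
qed

end
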